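(* In a two-player perfect-information game of depth $D$, let $U_s$ be the exact EPFs and $\{\tilde U_s\}$ learned EPFs with targets $\tilde U'_s$, as in the context. If $L_\infty(\tilde U_s,\tilde U'_s)\le\epsilon$ for all $s\in\mathcal S$, then for every $s\in\mathcal S$, $$\max_{\mu_2\in[\underline V(s),\overline V(s)]}|\tilde U_s(\mu_2)-U_s(\mu_2)|\le\epsilon D.$$
   Context: A two-player perfect-information game is a finite rooted tree with states $\mathcal S$. Its leaves $\mathcal L$ carry payoffs $r_1(\ell),r_2(\ell)$ for the leader $\mathsf P_1$ and the follower $\mathsf P_2$. Non-leaf states are partitioned into leader states $\mathcal S_1$ and follower states $\mathcal S_2$, and $\mathcal C(s)$ denotes the children of $s$. The depth $D$ is the maximum number of edges on a root-to-leaf path. Bounds, defined by backward induction: - $\underline V(\ell)=\overline V(\ell)=r_2(\ell)$ for leaves; - $\underline V(s)=\min_{s'}\underline V(s')$ for $s\in\mathcal S_1$; - $\underline V(s)=\max_{s'}\underline V(s')$ for $s\in\mathcal S_2$; - $\overline V(s)=\max_{s'}\overline V(s')$ for every non-leaf $s$. For $s\in\mathcal S_2$ and $s'\in\mathcal C(s)$, let $\tau(s')=\max_{s^!\in\mathcal C(s),s^!\ne s'}\underline V(s^!)$. Let $\beta(s')=\tau(s')$ if the parent of $s'$ is in $\mathcal S_2$, and $-\infty$ if it is in $\mathcal S_1$. Operators, for $g:\mathbb R\to\mathbb R\cup\{-\infty\}$: - $\bigwedge_i g_i$ is the pointwise infimum of all concave $h\ge\max_i g_i$; - $[g\triangleright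 t](\mu)=g(\mu)$ for $\mu\ge t$ and $-\infty$ otherwise. Exact EPFs: $U_\ell(\mu)=r_1(\ell)$ if $\mu=r_2(\ell)$ and $-\infty$ otherwise; $U_s=\bigwedge_{s'\in\mathcal C(s)}(U_{s'}\triangleright\beta(s'))$. Learned EPFs: $\tilde U_\ell=U_\ell$ for leaves. For non-leaf $s$, $\tilde U_s$ is the piecewise linear interpolation of finitely many points with $x$-coordinates in $[\underline V(s),\overline V(s)]$ including both endpoints. It is real-valued there and $-\infty$ outside. Targets: $\tilde U'_s=\bigwedge_{s'\in\mathcal C(s)}(\tilde U_{s'}\triangleright\beta(s'))$ for non-leaf $s$, and $\tilde U'_\ell=\tilde U_\ell$. The loss is $L_\infty(f,g)=\sup_\mu|f(\mu)-g(\mu)|$, with $|(-\infty)-(-\infty)|=0$. *)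

theory Defs
  imports Complex_Main "HOL-Library.Extended_Real"
begin

(* A leaf carries (r_1, r_2); an inner node carries its owner and
   its (nonempty) list of children.  States are identified with positions
   (paths of child indices from the root), so identical subtrees at different
   positions are different states. *)
datatype player = Leader | Follower

datatype game = Leaf real real | Node player "game list"

fun is_leaf :: "game \<Rightarrow> bool" where
  "is_leaf (Leaf _ _) = True"
| "is_leaf (Node _ _) = False"

fun wf_game :: "game \<Rightarrow> bool" where
  "wf_game (Leaf _ _) = True"
| "wf_game (Node pl ts) = (ts \<noteq> [] \<and> (\<forall>t\<in>set ts. wf_game t))"

fun depth :: "game \<Rightarrow> nat" where
  "depth (Leaf _ _) = 0"
| "depth (Node pl ts) = Suc (Max (insert 0 (set (map depth ts))))"

fun valid_pos :: "game \<Rightarrow> nat list \<Rightarrow> bool" where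
  "valid_pos t [] = True"
| "valid_pos (Leaf _ _) (i # p) = False"
| "valid_pos (Node pl ts) (i # p) = (i < length ts \<and> valid_pos (ts ! i) p)"

fun sub :: "game \<Rightarrow> nat list \<Rightarrow> game" where
  "sub t [] = t"
| "sub (Leaf a b) (i # p) = Leaf a b"
| "sub (Node pl ts) (i # p) = sub (ts ! i) p"

fun Vlow :: "game \<Rightarrow> real" where
  "Vlow (Leaf r1 r2) = r2"
| "Vlow (Node Leader ts) = Min (set (map Vlow ts))"
| "Vlow (Node Follower ts) = Max (set (map Vlow ts))"

fun Vup :: "game \<Rightarrow> real" where
  "Vup (Leaf r1 r2) = r2"
| "Vup (Node pl ts) = Max (set (map Vup ts))"

(* tau of the i-th child among siblings ts (max over the other siblings; -\<infinity> if none) *)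
definition tau :: "game list \<Rightarrow> nat \<Rightarrow> ereal" where
  "tau ts i = (SUP j\<in>{j. j < length ts \<and> j \<noteq> i}. ereal (Vlow (ts ! j)))"

definition beta :: "player \<Rightarrow> game list \<Rightarrow> nat \<Rightarrow> ereal" where
  "beta pl ts i = (if pl = Follower then tau ts i else -\<infinity>)"

definition restr :: "(real \<Rightarrow> ereal) \<Rightarrow> ereal \<Rightarrow> real \<Rightarrow> ereal" where
  "restr g t = (\<lambda>\<mu>. if t \<le> ereal \<mu> then g \<mu> else -\<infinity>)"

definition concave_ext :: "(real \<Rightarrow> ereal) \<Rightarrow> bool" where
  "concave_ext h \<longleftrightarrow> (\<forall>x y t. 0 < t \<and> t < 1 \<longrightarrow>
      ereal (1 - t) * h x + ereal t * h y \<le> h ((1 - t) * x + t * y))"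

definition chull :: "(real \<Rightarrow> ereal) set \<Rightarrow> real \<Rightarrow> ereal" where
  "chull G = (\<lambda>\<mu>. Inf {h \<mu> | h. (\<forall>x. h x \<noteq> \<infinity>) \<and> concave_ext h \<and>
                                   (\<forall>x. \<forall>g\<in>G. g x \<le> h x)})"

function U :: "game \<Rightarrow> real \<Rightarrow> ereal" where
  "U (Leaf r1 r2) = (\<lambda>\<mu>. if \<mu> = r2 then ereal r1 else -\<infinity>)"
| "U (Node pl ts) = chull ((\<lambda>i. restr (U (ts ! i)) (beta pl ts i)) ` {..<length ts})"
  by pat_completeness auto
termination
  apply (relation "measure size")
   apply auto
  by (metis add.commute less_Suc_eq_le nth_mem size_list_estimation' order_refl)

definition target :: "game \<Rightarrow> (nat list \<Rightarrow> real \<Rightarrow> ereal) \<Rightarrow> nat list \<Rightarrow> real \<Rightarrow> ereal" where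
  "target G Ut p = (case sub G p of
       Leaf _ _ \<Rightarrow> Ut p
     | Node pl ts \<Rightarrow> chull ((\<lambda>i. restr (Ut (p @ [i])) (beta pl ts i)) ` {..<length ts}))"

definition pwl_interp :: "(real \<Rightarrow> ereal) \<Rightarrow> real \<Rightarrow> real \<Rightarrow> bool" where
  "pwl_interp f a b \<longleftrightarrow> (\<exists>P y. finite P \<and> P \<subseteq> {a..b} \<and> a \<in> P \<and> b \<in> P \<and>
      (\<forall>\<mu>. \<mu> \<notin> {a..b} \<longrightarrow> f \<mu> = -\<infinity>) \<and>
      (\<forall>p\<in>P. f p = ereal (y p)) \<and>
      (\<forall>p\<in>P. \<forall>q\<in>P. p < q \<and> {p<..<q} \<inter> P = {} \<longrightarrow>
         (\<forall>\<mu>\<in>{p..q}. f \<mu> = ereal (y p + (\<mu> - p) / (q - p) * (y q - y p)))))"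

definition pt_err :: "ereal \<Rightarrow> ereal \<Rightarrow> ereal" where
  "pt_err x y = (if x = -\<infinity> \<and> y = -\<infinity> then 0 else \<bar>x - y\<bar>)"

definition Linf :: "(real \<Rightarrow> ereal) \<Rightarrow> (real \<Rightarrow> ereal) \<Rightarrow> ereal" where
  "Linf f g = (SUP \<mu>. pt_err (f \<mu>) (g \<mu>))"

end

theory Submission
  imports Defs
begin

(* Both operations that build an EPF from the EPFs of the children, restriction [g \<triangleright> t] and the
   concave hull, are non-expansive for the uniform distance: shifting every argument up by a
   constant d shifts the result up by at most d.  Hence the error of a learned EPF is at most its
   own loss \<epsilon> plus the largest error among its children, i.e. at most \<epsilon> times the height of the
   subtree.  On [\<underline>V(s), \<overline>V(s)] the exact EPF is finite (the children attaining \<underline>V(s) and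
   \<overline>V(s) pass the threshold \<beta> there, and the hull is finite between two finite points), so this
   extended-real bound is a bound on the absolute difference. *)

definition uniformly_close :: "real \<Rightarrow> (real \<Rightarrow> ereal) \<Rightarrow> (real \<Rightarrow> ereal) \<Rightarrow> bool" where
  "uniformly_close d f g \<longleftrightarrow> (\<forall>x. f x \<le> g x + ereal d \<and> g x \<le> f x + ereal d)"

lemma uniformly_close_refl: "0 \<le> d \<Longrightarrow> uniformly_close d f f"
  unfolding uniformly_close_def by (simp add: add_increasing2)

lemma uniformly_close_mono: "uniformly_close d f g \<Longrightarrow> d \<le> d' \<Longrightarrow> uniformly_close d' f g"
  unfolding uniformly_close_def by (meson add_left_mono ereal_less_eq(3) order_trans)

lemma uniformly_close_trans:
  assumes "uniformly_close d f g" and "uniformly_close d' g h"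
  shows "uniformly_close (d + d') f h"
  unfolding uniformly_close_def
proof
  fix x
  have "f x \<le> h x + ereal d' + ereal d" "h x \<le> f x + ereal d + ereal d'"
    using assms unfolding uniformly_close_def by (meson add_right_mono order_trans)+
  then show "f x \<le> h x + ereal (d + d') \<and> h x \<le> f x + ereal (d + d')"
    by (metis add.assoc add.commute plus_ereal.simps(1))
qed

lemma uniformly_close_abs_le:
  assumes "uniformly_close d f g" and "f x \<noteq> \<infinity>" and "g x \<noteq> -\<infinity>"
  shows "\<bar>f x - g x\<bar> \<le> ereal d"
  using assms(1)[unfolded uniformly_close_def, rule_format, of x] assms(2,3)
  by (cases "f x"; cases "g x") auto

lemma uniformly_close_restr:
  "uniformly_close d f g \<Longrightarrow> 0 \<le> d \<Longrightarrow> uniformly_close d (restr f t) (restr g t)"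
  unfolding uniformly_close_def restr_def by auto

lemma pt_err_le_ereal_iff:
  "pt_err a b \<le> ereal e \<longleftrightarrow>
     (a = -\<infinity> \<and> b = -\<infinity> \<and> 0 \<le> e) \<or> (\<exists>x y. a = ereal x \<and> b = ereal y \<and> \<bar>x - y\<bar> \<le> e)"
  by (cases a; cases b) (auto simp: pt_err_def)

lemma Linf_le_ereal_iff: "Linf f g \<le> ereal e \<longleftrightarrow> (\<forall>x. pt_err (f x) (g x) \<le> ereal e)"
  unfolding Linf_def by (simp add: SUP_le_iff)

lemma Linf_le_imp_nonneg: "Linf f g \<le> ereal e \<Longrightarrow> 0 \<le> e"
  by (auto simp: Linf_le_ereal_iff pt_err_le_ereal_iff)

lemma Linf_le_imp_neq_infinity: "Linf f g \<le> ereal e \<Longrightarrow> f x \<noteq> \<infinity>"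
  unfolding Linf_le_ereal_iff pt_err_le_ereal_iff by (erule allE[of _ x]) auto

lemma Linf_le_imp_uniformly_close:
  assumes "Linf f g \<le> ereal e"
  shows "uniformly_close e f g"
  unfolding uniformly_close_def
proof
  fix x
  have "pt_err (f x) (g x) \<le> ereal e" using assms by (simp add: Linf_le_ereal_iff)
  then show "f x \<le> g x + ereal e \<and> g x \<le> f x + ereal e"
    unfolding pt_err_le_ereal_iff by (elim disjE exE conjE) (simp_all add: abs_le_iff)
qed

definition concave_majorant :: "(real \<Rightarrow> ereal) set \<Rightarrow> (real \<Rightarrow> ereal) \<Rightarrow> bool" where
  "concave_majorant G h \<longleftrightarrow> (\<forall>x. h x \<noteq> \<infinity>) \<and> concave_ext h \<and> (\<forall>x. \<forall>g\<in>G. g x \<le> h x)"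

lemma chull_conv_INF: "chull G \<mu> = (INF h \<in> Collect (concave_majorant G). h \<mu>)"
  unfolding chull_def concave_majorant_def by (rule arg_cong[where f = Inf]) blast

lemma concave_ext_add_const:
  assumes "concave_ext h"
  shows "concave_ext (\<lambda>x. h x + ereal d)"
  unfolding concave_ext_def
proof (intro allI impI)
  fix x y t :: real assume t: "0 < t \<and> t < 1"
  have "ereal (1 - t) * (h x + ereal d) + ereal t * (h y + ereal d)
        = (ereal (1 - t) * h x + ereal (1 - t) * ereal d) + (ereal t * h y + ereal t * ereal d)"
    using t by (simp add: ereal_pos_distrib)
  also have "\<dots> = (ereal (1 - t) * h x + ereal t * h y) + (ereal (1 - t) * ereal d + ereal t * ereal d)"
    by (simp only: ac_simps)
  also have "ereal (1 - t) * ereal d + ereal t * ereal d = ereal d"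
    by (simp add: algebra_simps)
  also have "ereal (1 - t) * h x + ereal t * h y \<le> h ((1 - t) * x + t * y)"
    using assms t unfolding concave_ext_def by blast
  finally show "ereal (1 - t) * (h x + ereal d) + ereal t * (h y + ereal d)
        \<le> h ((1 - t) * x + t * y) + ereal d" by (simp add: add_right_mono)
qed

lemma chull_le_shift:
  assumes "\<forall>i\<in>I. \<forall>x. f i x \<le> g i x + ereal d"
  shows "chull (f ` I) \<mu> \<le> chull (g ` I) \<mu> + ereal d"
proof -
  have "chull (f ` I) \<mu> - ereal d \<le> h \<mu>" if h: "concave_majorant (g ` I) h" for h
  proof -
    have "f i x \<le> h x + ereal d" if "i \<in> I" for i x
      using assms h that unfolding concave_majorant_def by (meson add_right_mono image_eqI order_trans)
    then have "concave_majorant (f ` I) (\<lambda>x. h x + ereal d)"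
      using h unfolding concave_majorant_def by (auto intro: concave_ext_add_const)
    then have "chull (f ` I) \<mu> \<le> h \<mu> + ereal d"
      unfolding chull_conv_INF by (subst INF_lower[OF CollectI]) simp_all
    then show ?thesis by (simp add: ereal_minus_le)
  qed
  then have "chull (f ` I) \<mu> - ereal d \<le> chull (g ` I) \<mu>"
    unfolding chull_conv_INF[of "g ` I"] by (blast intro: INF_greatest)
  then show ?thesis by (simp add: ereal_minus_le)
qed

lemma uniformly_close_chull:
  "\<forall>i\<in>I. uniformly_close d (f i) (g i) \<Longrightarrow> uniformly_close d (chull (f ` I)) (chull (g ` I))"
  unfolding uniformly_close_def by (simp add: chull_le_shift)

lemma chull_upper: "g \<in> G \<Longrightarrow> g x \<le> chull G x"
  unfolding chull_conv_INF concave_majorant_def by (auto intro: INF_greatest)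

lemma chull_ge_convex_comb:
  assumes "g \<in> G" "g' \<in> G" "0 < s" "s < 1"
  shows "ereal (1 - s) * g x + ereal s * g' y \<le> chull G ((1 - s) * x + s * y)"
  unfolding chull_conv_INF
proof (rule INF_greatest)
  fix h assume "h \<in> Collect (concave_majorant G)"
  then have h: "concave_ext h" "\<forall>x. g x \<le> h x" "\<forall>x. g' x \<le> h x"
    using assms by (auto simp: concave_majorant_def)
  have "ereal (1 - s) * g x + ereal s * g' y \<le> ereal (1 - s) * h x + ereal s * h y"
    using h assms by (intro add_mono ereal_mult_left_mono) auto
  also have "\<dots> \<le> h ((1 - s) * x + s * y)"
    using h(1) assms unfolding concave_ext_def by blast
  finally show "ereal (1 - s) * g x + ereal s * g' y \<le> h ((1 - s) * x + s * y)" .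
qed

lemma chull_neq_minf_between:
  assumes "g \<in> G" "g' \<in> G" "g x \<noteq> -\<infinity>" "g' y \<noteq> -\<infinity>" "x \<le> \<mu>" "\<mu> \<le> y"
  shows "chull G \<mu> \<noteq> -\<infinity>"
proof (cases "\<mu> = x \<or> \<mu> = y")
  case True
  then have "g x \<le> chull G \<mu> \<or> g' y \<le> chull G \<mu>"
    using chull_upper assms(1,2) by blast
  then show ?thesis using assms(3,4) by auto
next
  case False
  then have "x < \<mu>" "\<mu> < y" using assms(5,6) by auto
  define s where "s = (\<mu> - x) / (y - x)"
  have s: "0 < s" "s < 1"
    using \<open>x < \<mu>\<close> \<open>\<mu> < y\<close> by (simp_all add: s_def)
  have "s * (y - x) = \<mu> - x"
    using \<open>x < \<mu>\<close> \<open>\<mu> < y\<close> by (simp add: s_def)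
  then have "\<mu> = (1 - s) * x + s * y" by (simp add: algebra_simps)
  moreover have "ereal (1 - s) * g x + ereal s * g' y \<noteq> -\<infinity>"
    using s assms(3,4) by (cases "g x"; cases "g' y") auto
  ultimately show ?thesis
    using chull_ge_convex_comb[OF assms(1,2) s, of x y] by auto
qed

lemma child_position:
  "valid_pos G p \<Longrightarrow> sub G p = Node pl ts \<Longrightarrow> i < length ts \<Longrightarrow>
   valid_pos G (p @ [i]) \<and> sub G (p @ [i]) = ts ! i"
proof (induction p arbitrary: G)
  case (Cons j p)
  then show ?case by (cases G) auto
qed auto

lemma wf_game_sub: "valid_pos G p \<Longrightarrow> wf_game G \<Longrightarrow> wf_game (sub G p)"
proof (induction p arbitrary: G)
  case (Cons j p)
  then show ?case by (cases G) auto
qed simp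

lemma depth_nth_less: "i < length ts \<Longrightarrow> depth (ts ! i) < depth (Node pl ts)"
  by (simp add: le_imp_less_Suc)

lemma depth_sub_le: "valid_pos G p \<Longrightarrow> depth (sub G p) \<le> depth G"
proof (induction p arbitrary: G)
  case (Cons j p)
  show ?case
  proof (cases G)
    case (Node pl ts)
    then have "depth (sub (ts ! j) p) \<le> depth (ts ! j)" "j < length ts"
      using Cons by auto
    then show ?thesis using Node depth_nth_less[of j ts pl] by simp
  qed simp
qed simp

lemma image_set_conv_nth: "y \<in> f ` set xs \<longleftrightarrow> (\<exists>k<length xs. y = f (xs ! k))"
  unfolding image_iff by (metis in_set_conv_nth nth_mem)

lemma Vlow_Node_attained:
  assumes "ts \<noteq> []"
  shows "\<exists>k<length ts. Vlow (Node pl ts) = Vlow (ts ! k)"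
proof -
  have "Vlow (Node pl ts) \<in> Vlow ` set ts"
    using assms by (cases pl) (simp_all add: Min_in Max_in)
  then show ?thesis unfolding image_set_conv_nth .
qed

lemma Vup_Node_attained:
  assumes "ts \<noteq> []"
  shows "\<exists>j<length ts. Vup (Node pl ts) = Vup (ts ! j)"
proof -
  have "Vup (Node pl ts) \<in> Vup ` set ts"
    using assms by (simp add: Max_in)
  then show ?thesis unfolding image_set_conv_nth .
qed

lemma Vup_nth_le: "i < length ts \<Longrightarrow> Vup (ts ! i) \<le> Vup (Node pl ts)"
  by simp

lemma Vlow_le_Vup: "wf_game t \<Longrightarrow> Vlow t \<le> Vup t"
proof (induction t)
  case (Node pl ts)
  obtain k where k: "k < length ts" "Vlow (Node pl ts) = Vlow (ts ! k)"
    using Node.prems Vlow_Node_attained[of ts pl] by auto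
  have "Vlow (ts ! k) \<le> Vup (ts ! k)" using Node k(1) by simp
  also have "\<dots> \<le> Vup (Node pl ts)" using k(1) by (rule Vup_nth_le)
  finally show ?case using k(2) by simp
qed simp

lemma beta_le_Vlow: "beta pl ts i \<le> ereal (Vlow (Node pl ts))"
  by (cases pl) (auto simp: beta_def tau_def intro!: SUP_least)

lemma beta_le_Vup:
  assumes "wf_game (Node pl ts)"
  shows "beta pl ts i \<le> ereal (Vup (Node pl ts))"
proof -
  have "Vlow (ts ! j) \<le> Vup (Node pl ts)" if "j < length ts" for j
  proof -
    have "Vlow (ts ! j) \<le> Vup (ts ! j)" using assms that by (simp add: Vlow_le_Vup)
    also have "\<dots> \<le> Vup (Node pl ts)" using that by (rule Vup_nth_le)
    finally show ?thesis .
  qed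
  then show ?thesis by (cases pl) (auto simp: beta_def tau_def intro!: SUP_least)
qed

lemma U_neq_minf: "wf_game t \<Longrightarrow> Vlow t \<le> \<mu> \<Longrightarrow> \<mu> \<le> Vup t \<Longrightarrow> U t \<mu> \<noteq> -\<infinity>"
proof (induction t arbitrary: \<mu>)
  case (Node pl ts)
  let ?g = "\<lambda>i. restr (U (ts ! i)) (beta pl ts i)"
  have wf: "wf_game (ts ! i)" if "i < length ts" for i
    using Node.prems(1) that by simp
  have child: "U (ts ! i) x \<noteq> -\<infinity>" if "i < length ts" "x \<in> {Vlow (ts ! i), Vup (ts ! i)}" for i x
    using Node.IH[OF nth_mem[OF that(1)] wf[OF that(1)]] Vlow_le_Vup[OF wf[OF that(1)]] that(2)
    by auto
  obtain k where k: "k < length ts" "Vlow (Node pl ts) = Vlow (ts ! k)"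
    using Node.prems(1) Vlow_Node_attained[of ts pl] by auto
  obtain j where j: "j < length ts" "Vup (Node pl ts) = Vup (ts ! j)"
    using Node.prems(1) Vup_Node_attained[of ts pl] by auto
  have "?g k (Vlow (ts ! k)) \<noteq> -\<infinity>"
    using child[OF k(1)] beta_le_Vlow[of pl ts k] k(2) by (simp add: restr_def)
  moreover have "?g j (Vup (ts ! j)) \<noteq> -\<infinity>"
    using child[OF j(1)] beta_le_Vup[OF Node.prems(1), of j] j(2) by (simp add: restr_def)
  ultimately have "chull (?g ` {..<length ts}) \<mu> \<noteq> -\<infinity>"
    using k j Node.prems(2,3) by (intro chull_neq_minf_between[where g = "?g k" and g' = "?g j"]) auto
  then show ?case by simp
qed simp

lemma learned_EPF_uniformly_close:
  assumes leaves: "\<forall>p. valid_pos G p \<and> is_leaf (sub G p) \<longrightarrow> Ut p = U (sub G p)"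
    and loss: "\<forall>p. valid_pos G p \<longrightarrow> Linf (Ut p) (target G Ut p) \<le> ereal \<epsilon>"
    and p: "valid_pos G p"
  shows "uniformly_close (\<epsilon> * depth (sub G p)) (Ut p) (U (sub G p))"
proof -
  have \<epsilon>: "0 \<le> \<epsilon>"
    using loss Linf_le_imp_nonneg valid_pos.simps(1) by blast
  have "uniformly_close (\<epsilon> * depth t) (Ut p) (U t)" if "valid_pos G p" "sub G p = t" for t p
    using that
  proof (induction t arbitrary: p)
    case (Leaf r1 r2)
    then show ?case using leaves by (simp add: uniformly_close_refl)
  next
    case (Node pl ts)
    define d where "d = depth (Node pl ts) - 1"
    have children: "uniformly_close (\<epsilon> * d) (Ut (p @ [i])) (U (ts ! i))" if "i < length ts" for i
    proof -
      have "depth (ts ! i) \<le> d" using depth_nth_less[OF that] by (simp add: d_def)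
      then have "\<epsilon> * depth (ts ! i) \<le> \<epsilon> * d" using \<epsilon> by (simp add: mult_left_mono)
      then show ?thesis
        using Node.IH[of "ts ! i" "p @ [i]"] child_position[OF Node.prems that] that
        by (auto intro: uniformly_close_mono)
    qed
    have "uniformly_close (\<epsilon> * d) (target G Ut p) (U (Node pl ts))"
      using Node.prems children \<epsilon>
      by (auto simp: target_def intro!: uniformly_close_chull uniformly_close_restr)
    then have "uniformly_close (\<epsilon> + \<epsilon> * d) (Ut p) (U (Node pl ts))"
      using uniformly_close_trans Linf_le_imp_uniformly_close loss Node.prems(1) by blast
    then show ?case by (simp add: d_def algebra_simps)
  qed
  then show ?thesis using p by blast
qed

theorem theorem5:
  fixes G :: game and Ut :: "nat list \<Rightarrow> real \<Rightarrow> ereal" and \<epsilon> :: real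
  assumes "wf_game G"
    and "\<forall>p. valid_pos G p \<and> is_leaf (sub G p) \<longrightarrow> Ut p = U (sub G p)"
    and "\<forall>p. valid_pos G p \<and> \<not> is_leaf (sub G p) \<longrightarrow>
           pwl_interp (Ut p) (Vlow (sub G p)) (Vup (sub G p))"
    and "\<forall>p. valid_pos G p \<longrightarrow> Linf (Ut p) (target G Ut p) \<le> ereal \<epsilon>"
  shows "\<forall>p. valid_pos G p \<longrightarrow>
           (SUP \<mu>\<in>{Vlow (sub G p)..Vup (sub G p)}. \<bar>Ut p \<mu> - U (sub G p) \<mu>\<bar>)
             \<le> ereal (\<epsilon> * real (depth G))"
proof (intro allI impI SUP_least)
  fix p \<mu> assume p: "valid_pos G p" and \<mu>: "\<mu> \<in> {Vlow (sub G p)..Vup (sub G p)}"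
  have "0 \<le> \<epsilon>"
    using assms(4) Linf_le_imp_nonneg valid_pos.simps(1) by blast
  then have "\<epsilon> * depth (sub G p) \<le> \<epsilon> * depth G"
    using depth_sub_le[OF p] by (simp add: mult_left_mono)
  then have "uniformly_close (\<epsilon> * depth G) (Ut p) (U (sub G p))"
    using learned_EPF_uniformly_close[OF assms(2,4) p] by (rule uniformly_close_mono[rotated])
  moreover have "Ut p \<mu> \<noteq> \<infinity>"
    using assms(4) p Linf_le_imp_neq_infinity by blast
  moreover have "U (sub G p) \<mu> \<noteq> -\<infinity>"
    using U_neq_minf[OF wf_game_sub[OF p assms(1)]] \<mu> by auto
  ultimately show "\<bar>Ut p \<mu> - U (sub G p) \<mu>\<bar> \<le> ereal (\<epsilon> * real (depth G))"
    by (rule uniformly_close_abs_le)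
qed

end
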